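(* Let $R$ be a von Neumann regular ring with identity, $G$ a group, and $\alpha: G\to\mathrm{Aut}(R)$ an action such that $1$ is the only element $g\in G$ for which $\alpha(g)$ is corner-inner. Then the skew group ring $R*_{\alpha}G$ is simple if and only if $R$ is $G$-simple.
   Context: For $g\in G$, $r\in R$ write ${}^g r=\alpha(g)(r)$. The skew group ring $R*_{\alpha}G$ is the free left $R$-module with basis $G$, with multiplication determined by those of $R$ and $G$ and $g r={}^g r\, g$, extended linearly. An ideal $I$ of $R$ is $G$-invariant if ${}^gI\subseteq I$ for all $g\in G$; $R$ is $G$-simple if $R\ne 0$ and its only $G$-invariant ideals are $0$ and $R$. An automorphism $f$ of $R$ is corner-inner if there exist a nonzero idempotent $e\in R$ and, setting $e'=f^{-1}(e)$, elements $u\in eRe'$ and $v\in e'Re$ such that $uv=e$, $vu=e'$, $f(x)=uxv$ for all $x\in e'Re'$, and $f^{-1}(y)=vyu$ for all $y\in eRe$. *)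

theory Defs
  imports "HOL-Algebra.Algebra"
begin

definition von_neumann_regular :: "('a, 'b) ring_scheme \<Rightarrow> bool" where
  "von_neumann_regular R \<longleftrightarrow> ring R \<and>
     (\<forall>a \<in> carrier R. \<exists>x \<in> carrier R. a \<otimes>\<^bsub>R\<^esub> x \<otimes>\<^bsub>R\<^esub> a = a)"

definition simple_ring :: "('a, 'b) ring_scheme \<Rightarrow> bool" where
  "simple_ring R \<longleftrightarrow> ring R \<and> carrier R \<noteq> {\<zero>\<^bsub>R\<^esub>} \<and>
     (\<forall>I. ideal I R \<longrightarrow> I = {\<zero>\<^bsub>R\<^esub>} \<or> I = carrier R)"

definition ring_action ::
  "('g, 'c) monoid_scheme \<Rightarrow> ('a, 'b) ring_scheme \<Rightarrow> ('g \<Rightarrow> 'a \<Rightarrow> 'a) \<Rightarrow> bool" where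
  "ring_action G R \<alpha> \<longleftrightarrow>
     (\<forall>g \<in> carrier G. \<alpha> g \<in> ring_iso R R) \<and>
     (\<forall>x \<in> carrier R. \<alpha> \<one>\<^bsub>G\<^esub> x = x) \<and>
     (\<forall>g \<in> carrier G. \<forall>h \<in> carrier G. \<forall>x \<in> carrier R.
         \<alpha> (g \<otimes>\<^bsub>G\<^esub> h) x = \<alpha> g (\<alpha> h x))"

definition G_invariant_ideal ::
  "('g, 'c) monoid_scheme \<Rightarrow> ('a, 'b) ring_scheme \<Rightarrow> ('g \<Rightarrow> 'a \<Rightarrow> 'a) \<Rightarrow> 'a set \<Rightarrow> bool" where
  "G_invariant_ideal G R \<alpha> I \<longleftrightarrow> ideal I R \<and> (\<forall>g \<in> carrier G. \<alpha> g ` I \<subseteq> I)"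

definition G_simple ::
  "('g, 'c) monoid_scheme \<Rightarrow> ('a, 'b) ring_scheme \<Rightarrow> ('g \<Rightarrow> 'a \<Rightarrow> 'a) \<Rightarrow> bool" where
  "G_simple G R \<alpha> \<longleftrightarrow> carrier R \<noteq> {\<zero>\<^bsub>R\<^esub>} \<and>
     (\<forall>I. G_invariant_ideal G R \<alpha> I \<longrightarrow> I = {\<zero>\<^bsub>R\<^esub>} \<or> I = carrier R)"

definition corner :: "('a, 'b) ring_scheme \<Rightarrow> 'a \<Rightarrow> 'a \<Rightarrow> 'a set" where
  "corner R e e' = {e \<otimes>\<^bsub>R\<^esub> x \<otimes>\<^bsub>R\<^esub> e' | x. x \<in> carrier R}"

definition corner_inner :: "('a, 'b) ring_scheme \<Rightarrow> ('a \<Rightarrow> 'a) \<Rightarrow> bool" where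
  "corner_inner R f \<longleftrightarrow> f \<in> ring_iso R R \<and>
     (\<exists>e \<in> carrier R. e \<noteq> \<zero>\<^bsub>R\<^esub> \<and> e \<otimes>\<^bsub>R\<^esub> e = e \<and>
        (let e' = inv_into (carrier R) f e in
         \<exists>u \<in> corner R e e'. \<exists>v \<in> corner R e' e.
           u \<otimes>\<^bsub>R\<^esub> v = e \<and> v \<otimes>\<^bsub>R\<^esub> u = e' \<and>
           (\<forall>x \<in> corner R e' e'. f x = u \<otimes>\<^bsub>R\<^esub> x \<otimes>\<^bsub>R\<^esub> v) \<and>
           (\<forall>y \<in> corner R e e. inv_into (carrier R) f y = v \<otimes>\<^bsub>R\<^esub> y \<otimes>\<^bsub>R\<^esub> u)))"

text \<open>Skew group ring R *_alpha G: finitely supported functions G -> R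
  (extensional outside carrier G), an element f standing for
  sum_g f(g) g; multiplication from (r g)(s h) = (r ^g s)(g h).\<close>
definition skew_group_ring ::
  "('a, 'b) ring_scheme \<Rightarrow> ('g, 'c) monoid_scheme \<Rightarrow> ('g \<Rightarrow> 'a \<Rightarrow> 'a) \<Rightarrow> ('g \<Rightarrow> 'a) ring" where
  "skew_group_ring R G \<alpha> =
   \<lparr> carrier = {f \<in> carrier G \<rightarrow>\<^sub>E carrier R. finite {g \<in> carrier G. f g \<noteq> \<zero>\<^bsub>R\<^esub>}},
     monoid.mult = (\<lambda>f h. \<lambda>x \<in> carrier G.
               finsum R (\<lambda>g. f g \<otimes>\<^bsub>R\<^esub> \<alpha> g (h (inv\<^bsub>G\<^esub> g \<otimes>\<^bsub>G\<^esub> x)))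
                        {g \<in> carrier G. f g \<noteq> \<zero>\<^bsub>R\<^esub>}),
     one = (\<lambda>x \<in> carrier G. if x = \<one>\<^bsub>G\<^esub> then \<one>\<^bsub>R\<^esub> else \<zero>\<^bsub>R\<^esub>),
     ring.zero = (\<lambda>x \<in> carrier G. \<zero>\<^bsub>R\<^esub>),
     add = (\<lambda>f h. \<lambda>x \<in> carrier G. f x \<oplus>\<^bsub>R\<^esub> h x) \<rparr>"

end

theory Submission
  imports Defs
begin

(* Extending a G-invariant ideal I of R to the elements of R *_alpha G with all coefficients in I
   shows that simplicity of the skew group ring forces G-simplicity of R.
   Conversely, take a nonzero element f of minimal support in a nonzero ideal J. Multiplying f
   by monomials on both sides and using regularity, its coefficient at 1 becomes a nonzero
   idempotent e. Minimality of the support kills every element of J that is supported in supp f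
   and vanishes somewhere on it; applied to x f - f x, x f and f x for x in e R e, this says that
   each coefficient u = f(g) intertwines x with ^g x and is left and right faithful on the
   corners. A quasi-inverse of u then witnesses that alpha(g) is corner-inner, so g = 1 and
   e = f(1) lies in the G-invariant ideal J \<inter> R, which is therefore R. *)

lemma (in abelian_monoid) finsum_swap:
  assumes "finite A" "finite B" "\<And>i j. i \<in> A \<Longrightarrow> j \<in> B \<Longrightarrow> F i j \<in> carrier G"
  shows "(\<Oplus>i\<in>A. \<Oplus>j\<in>B. F i j) = (\<Oplus>j\<in>B. \<Oplus>i\<in>A. F i j)"
  using assms
proof (induct A rule: finite_induct)
  case (insert a A)
  have "(\<Oplus>i\<in>insert a A. \<Oplus>j\<in>B. F i j) = (\<Oplus>j\<in>B. F a j) \<oplus> (\<Oplus>j\<in>B. \<Oplus>i\<in>A. F i j)"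
    using insert by (subst finsum_insert) (auto intro!: finsum_closed)
  also have "\<dots> = (\<Oplus>j\<in>B. F a j \<oplus> (\<Oplus>i\<in>A. F i j))"
    using insert by (subst finsum_addf) (auto intro!: finsum_closed)
  also have "\<dots> = (\<Oplus>j\<in>B. \<Oplus>i\<in>insert a A. F i j)"
    using insert by (intro finsum_cong') (auto intro!: finsum_closed simp: finsum_insert)
  finally show ?case .
qed (simp add: finsum_zero)

lemma (in abelian_monoid) finsum_eq_single:
  assumes "finite A" "p \<in> A" "\<And>i. i \<in> A \<Longrightarrow> i \<noteq> p \<Longrightarrow> F i = \<zero>" "F p \<in> carrier G"
  shows "finsum G F A = F p"
proof -
  have "F \<in> A \<rightarrow> carrier G"
  proof
    fix i assume "i \<in> A"
    then show "F i \<in> carrier G"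
      using assms by (cases "i = p") auto
  qed
  then have "finsum G F {p} = finsum G F A"
    using assms by (intro add.finprod_mono_neutral_cong_left) auto
  then show ?thesis
    using assms by simp
qed

lemma (in ideal) finsum_in_ideal:
  assumes "finite A" "\<And>i. i \<in> A \<Longrightarrow> F i \<in> I"
  shows "finsum R F A \<in> I"
  using assms
proof (induct A rule: finite_induct)
  case (insert a A)
  have "F a \<in> I" "finsum R F A \<in> I"
    using insert.prems insert.hyps(3) by blast+
  then have "F a \<oplus> finsum R F A \<in> I"
    by (rule additive_subgroup.a_closed[OF is_additive_subgroup])
  moreover have "F \<in> A \<rightarrow> carrier R" "F a \<in> carrier R"
    using insert.prems Icarr by auto
  ultimately show ?case
    using insert.hyps by (simp add: finsum_insert)
qed (simp only: finsum_empty additive_subgroup.zero_closed[OF is_additive_subgroup])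

lemma (in ring) corner_memI:
  assumes "y \<in> carrier R" "e \<otimes> y = y" "y \<otimes> e' = y"
  shows "y \<in> corner R e e'"
  using assms unfolding corner_def by (intro CollectI exI[of _ y]) simp

lemma (in ring) corner_memD:
  assumes e: "e \<in> carrier R" "e \<otimes> e = e" and e': "e' \<in> carrier R" "e' \<otimes> e' = e'"
    and y: "y \<in> corner R e e'"
  shows "y \<in> carrier R" "e \<otimes> y = y" "y \<otimes> e' = y"
proof -
  obtain x where x: "x \<in> carrier R" "y = e \<otimes> x \<otimes> e'"
    using y by (auto simp: corner_def)
  show "y \<in> carrier R"
    using x e e' by simp
  show "e \<otimes> y = y"
    using x e e' by (simp add: m_assoc[symmetric])
  show "y \<otimes> e' = y"
    using x e e' by (simp add: m_assoc)
qed

lemma (in ring) faithful_corner_element_inverse: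
  assumes e: "e \<in> carrier R" "e \<otimes> e = e" and E: "E \<in> carrier R" "E \<otimes> E = E"
    and u: "u \<in> carrier R" "e \<otimes> u = u" "u \<otimes> E = u"
    and w: "w \<in> carrier R" "u \<otimes> w \<otimes> u = u"
    and left_faithful: "\<And>x. x \<in> corner R e e \<Longrightarrow> x \<otimes> u = \<zero> \<Longrightarrow> x = \<zero>"
    and right_faithful: "\<And>y. y \<in> corner R E E \<Longrightarrow> u \<otimes> y = \<zero> \<Longrightarrow> y = \<zero>"
  shows "u \<otimes> (E \<otimes> w \<otimes> e) = e" "E \<otimes> w \<otimes> e \<otimes> u = E"
proof -
  have assoc_rules: "e \<otimes> (e \<otimes> q) = e \<otimes> q" "E \<otimes> (E \<otimes> q) = E \<otimes> q" "e \<otimes> (u \<otimes> q) = u \<otimes> q"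
    "u \<otimes> (E \<otimes> q) = u \<otimes> q" "u \<otimes> (w \<otimes> (u \<otimes> q)) = u \<otimes> q"
    if "q \<in> carrier R" for q
    using that e E u w by (simp_all add: m_assoc[symmetric])
  have uwu: "u \<otimes> (w \<otimes> u) = u"
    using u w by (simp add: m_assoc)
  note simps = m_assoc r_distr l_distr r_minus l_minus minus_eq assoc_rules uwu e E u w
  have "e \<ominus> u \<otimes> (w \<otimes> e) = \<zero>"
  proof (rule left_faithful)
    show "e \<ominus> u \<otimes> (w \<otimes> e) \<in> corner R e e"
      by (rule corner_memI) (simp_all add: simps)
    show "(e \<ominus> u \<otimes> (w \<otimes> e)) \<otimes> u = \<zero>"
      by (simp add: simps r_neg)
  qed
  then have "u \<otimes> (w \<otimes> e) = e"
    using e u w by (metis r_right_minus_eq m_closed)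
  then show "u \<otimes> (E \<otimes> w \<otimes> e) = e"
    by (simp add: simps)
  have "E \<ominus> E \<otimes> (w \<otimes> u) = \<zero>"
  proof (rule right_faithful)
    show "E \<ominus> E \<otimes> (w \<otimes> u) \<in> corner R E E"
      by (rule corner_memI) (simp_all add: simps)
    show "u \<otimes> (E \<ominus> E \<otimes> (w \<otimes> u)) = \<zero>"
      by (simp add: simps r_neg)
  qed
  then have "E \<otimes> (w \<otimes> u) = E"
    using E u w by (metis r_right_minus_eq m_closed)
  then show "E \<otimes> w \<otimes> e \<otimes> u = E"
    by (simp add: simps)
qed

lemma (in ring) ring_iso_inv_into_corner:
  assumes f: "f \<in> ring_iso R R" and e: "e \<in> carrier R" and y: "y \<in> corner R (f e) (f e)"
  shows "inv_into (carrier R) f y \<in> corner R e e" "f (inv_into (carrier R) f y) = y"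
proof -
  interpret f: ring_hom_ring R R f
    using f ring_axioms by (intro ring_hom_ringI2) (simp_all add: ring_iso_def)
  have bij: "bij_betw f (carrier R) (carrier R)"
    using f by (simp add: ring_iso_def)
  obtain z where z: "z \<in> carrier R" "y = f e \<otimes> z \<otimes> f e"
    using y by (auto simp: corner_def)
  define x where "x = inv_into (carrier R) f z"
  have x: "x \<in> carrier R" "f x = z"
    using bij z(1) by (auto simp: x_def bij_betw_def intro: inv_into_into f_inv_into_f)
  have y_eq: "y = f (e \<otimes> x \<otimes> e)"
    using z x e by simp
  have inv_y: "inv_into (carrier R) f y = e \<otimes> x \<otimes> e"
    unfolding y_eq using bij x e by (intro inv_into_f_f) (simp_all add: bij_betw_def)
  show "inv_into (carrier R) f y \<in> corner R e e"
    unfolding inv_y corner_def using x(1) by blast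
  show "f (inv_into (carrier R) f y) = y"
    unfolding inv_y by (rule y_eq[symmetric])
qed

(* The idempotent of corner_inner_def is f e here, so u and v trade places with the u and v there. *)
lemma (in ring) corner_innerI:
  assumes f: "f \<in> ring_iso R R" and e: "e \<in> carrier R" "e \<otimes> e = e" "e \<noteq> \<zero>"
    and u: "u \<in> corner R e (f e)" and v: "v \<in> corner R (f e) e" and uv: "u \<otimes> v = e" and vu: "v \<otimes> u = f e"
    and intertwines: "\<And>x. x \<in> corner R e e \<Longrightarrow> x \<otimes> u = u \<otimes> f x"
  shows "corner_inner R f"
proof -
  interpret f: ring_hom_ring R R f
    using f ring_axioms by (intro ring_hom_ringI2) (simp_all add: ring_iso_def)
  have inj: "inj_on f (carrier R)"
    using f by (simp add: ring_iso_def bij_betw_def)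
  have fe: "f e \<in> carrier R" "f e \<otimes> f e = f e"
    using e by (simp_all add: f.hom_mult[symmetric])
  have uR: "u \<in> carrier R" and vR: "v \<in> carrier R"
    using corner_memD(1)[OF e(1,2) fe u] corner_memD(1)[OF fe e(1,2) v] .
  have "f e \<noteq> \<zero>"
    using inj_onD[OF inj _ e(1) zero_closed] e(3) by auto
  have conj: "f x = v \<otimes> x \<otimes> u" if x: "x \<in> corner R e e" for x
  proof -
    have xR: "x \<in> carrier R" and ex: "e \<otimes> x = x"
      using corner_memD[OF e(1,2) e(1,2) x] by simp_all
    have "v \<otimes> x \<otimes> u = v \<otimes> u \<otimes> f x"
      using intertwines[OF x] xR uR vR by (simp add: m_assoc)
    then show ?thesis
      using vu xR e(1) ex by (simp flip: f.hom_mult)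
  qed
  have inv_conj: "inv_into (carrier R) f y = u \<otimes> y \<otimes> v" if y: "y \<in> corner R (f e) (f e)" for y
  proof -
    define x where "x = inv_into (carrier R) f y"
    have x: "x \<in> corner R e e" "y = v \<otimes> x \<otimes> u"
      using ring_iso_inv_into_corner[OF f e(1) y] conj by (simp_all add: x_def)
    then have xR: "x \<in> carrier R" and ex: "e \<otimes> x = x" and xe: "x \<otimes> e = x"
      using corner_memD[OF e(1,2) e(1,2)] by simp_all
    have "u \<otimes> y \<otimes> v = u \<otimes> v \<otimes> x \<otimes> (u \<otimes> v)"
      unfolding x(2) using xR uR vR by (simp add: m_assoc)
    also have "\<dots> = x"
      using uv ex xe by simp
    finally show ?thesis
      unfolding x_def ..
  qed
  have "inv_into (carrier R) f (f e) = e"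
    using inj e by simp
  then show ?thesis
    unfolding corner_inner_def Let_def
    using f fe \<open>f e \<noteq> \<zero>\<close> u v uv vu conj inv_conj by fastforce
qed

lemma (in ring) corner_innerI_faithful:
  assumes f: "f \<in> ring_iso R R"
    and e: "e \<in> carrier R" "e \<otimes> e = e" "e \<noteq> \<zero>"
    and u: "u \<in> carrier R" "e \<otimes> u = u" "u \<otimes> f e = u"
    and w: "w \<in> carrier R" "u \<otimes> w \<otimes> u = u"
    and intertwines: "\<And>x. x \<in> corner R e e \<Longrightarrow> x \<otimes> u = u \<otimes> f x"
    and left_faithful: "\<And>x. x \<in> corner R e e \<Longrightarrow> x \<otimes> u = \<zero> \<Longrightarrow> x = \<zero>"
    and right_faithful: "\<And>y. y \<in> corner R (f e) (f e) \<Longrightarrow> u \<otimes> y = \<zero> \<Longrightarrow> y = \<zero>"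
  shows "corner_inner R f"
proof -
  have fe: "f e \<in> carrier R" "f e \<otimes> f e = f e"
    using ring_iso_memE(1)[OF f e(1)] ring_iso_memE(2)[OF f e(1) e(1)] e(2) by simp_all
  define v where "v = f e \<otimes> w \<otimes> e"
  have "u \<otimes> v = e" "v \<otimes> u = f e"
    using faithful_corner_element_inverse[OF e(1,2) fe u w left_faithful right_faithful]
    by (simp_all only: v_def)
  moreover have "u \<in> corner R e (f e)"
    using u by (rule corner_memI)
  moreover have "v \<in> corner R (f e) e"
    using w(1) unfolding corner_def v_def by blast
  ultimately show ?thesis
    using corner_innerI[OF f e _ _ _ _ intertwines] by blast
qed

locale ring_group_action = R?: ring R + G: group G
  for R :: "('a, 'b) ring_scheme" (structure) and G :: "('g, 'c) monoid_scheme"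
  + fixes \<alpha> :: "'g \<Rightarrow> 'a \<Rightarrow> 'a"
  assumes action: "ring_action G R \<alpha>"
begin

abbreviation S :: "('g \<Rightarrow> 'a) ring" where "S \<equiv> skew_group_ring R G \<alpha>"

lemma action_iso: "g \<in> carrier G \<Longrightarrow> \<alpha> g \<in> ring_iso R R"
  using action unfolding ring_action_def by blast

lemma action_hom: "g \<in> carrier G \<Longrightarrow> \<alpha> g \<in> ring_hom R R"
  using action_iso unfolding ring_iso_def by blast

lemma action_closed [simp, intro]: "g \<in> carrier G \<Longrightarrow> x \<in> carrier R \<Longrightarrow> \<alpha> g x \<in> carrier R"
  using ring_hom_closed[OF action_hom] .

lemma action_add [simp]:
  "g \<in> carrier G \<Longrightarrow> x \<in> carrier R \<Longrightarrow> y \<in> carrier R \<Longrightarrow> \<alpha> g (x \<oplus> y) = \<alpha> g x \<oplus> \<alpha> g y"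
  using ring_hom_add[OF action_hom] .

lemma action_mult [simp]:
  "g \<in> carrier G \<Longrightarrow> x \<in> carrier R \<Longrightarrow> y \<in> carrier R \<Longrightarrow> \<alpha> g (x \<otimes> y) = \<alpha> g x \<otimes> \<alpha> g y"
  using ring_hom_mult[OF action_hom] .

lemma action_zero [simp]: "g \<in> carrier G \<Longrightarrow> \<alpha> g \<zero> = \<zero>"
  using ring_hom_zero[OF action_hom ring_axioms ring_axioms] .

lemma action_one [simp]: "g \<in> carrier G \<Longrightarrow> \<alpha> g \<one> = \<one>"
  using ring_hom_one[OF action_hom] .

lemma action_finsum:
  "g \<in> carrier G \<Longrightarrow> F \<in> A \<rightarrow> carrier R \<Longrightarrow> \<alpha> g (finsum R F A) = (\<Oplus>i\<in>A. \<alpha> g (F i))"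
  using ring_hom_ring.hom_finsum[OF ring_hom_ringI2[OF ring_axioms ring_axioms action_hom]]
  by (simp add: comp_def)

lemma action_one_group [simp]: "x \<in> carrier R \<Longrightarrow> \<alpha> \<one>\<^bsub>G\<^esub> x = x"
  using action unfolding ring_action_def by blast

lemma action_mult_group:
  "g \<in> carrier G \<Longrightarrow> h \<in> carrier G \<Longrightarrow> x \<in> carrier R \<Longrightarrow> \<alpha> (g \<otimes>\<^bsub>G\<^esub> h) x = \<alpha> g (\<alpha> h x)"
  using action unfolding ring_action_def by blast

lemma action_inv_left [simp]: "g \<in> carrier G \<Longrightarrow> x \<in> carrier R \<Longrightarrow> \<alpha> (inv\<^bsub>G\<^esub> g) (\<alpha> g x) = x"
  by (metis G.inv_closed G.l_inv action_mult_group action_one_group)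

lemma action_inv_right [simp]: "g \<in> carrier G \<Longrightarrow> x \<in> carrier R \<Longrightarrow> \<alpha> g (\<alpha> (inv\<^bsub>G\<^esub> g) x) = x"
  by (metis G.inv_closed G.r_inv action_mult_group action_one_group)

definition supp :: "('g \<Rightarrow> 'a) \<Rightarrow> 'g set" where
  "supp f = {g \<in> carrier G. f g \<noteq> \<zero>}"

definition single :: "'a \<Rightarrow> 'g \<Rightarrow> 'g \<Rightarrow> 'a" where
  "single r k = (\<lambda>x\<in>carrier G. if x = k then r else \<zero>)"

lemma skew_carrier: "carrier S = {f \<in> carrier G \<rightarrow>\<^sub>E carrier R. finite (supp f)}"
  by (simp add: skew_group_ring_def supp_def)

lemma skew_mult: "f \<otimes>\<^bsub>S\<^esub> h = (\<lambda>x\<in>carrier G. \<Oplus>g\<in>supp f. f g \<otimes> \<alpha> g (h (inv\<^bsub>G\<^esub> g \<otimes>\<^bsub>G\<^esub> x)))"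
  by (simp add: skew_group_ring_def supp_def)

lemma skew_one: "\<one>\<^bsub>S\<^esub> = single \<one> \<one>\<^bsub>G\<^esub>"
  by (simp add: skew_group_ring_def single_def)

lemma skew_zero: "\<zero>\<^bsub>S\<^esub> = (\<lambda>x\<in>carrier G. \<zero>)"
  by (simp add: skew_group_ring_def)

lemma skew_add: "f \<oplus>\<^bsub>S\<^esub> h = (\<lambda>x\<in>carrier G. f x \<oplus> h x)"
  by (simp add: skew_group_ring_def)

lemma skew_add_apply: "x \<in> carrier G \<Longrightarrow> (f \<oplus>\<^bsub>S\<^esub> h) x = f x \<oplus> h x"
  by (simp add: skew_add)

lemma skew_zero_apply: "x \<in> carrier G \<Longrightarrow> \<zero>\<^bsub>S\<^esub> x = \<zero>"
  by (simp add: skew_zero)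

lemma skew_mult_apply:
  "x \<in> carrier G \<Longrightarrow> (f \<otimes>\<^bsub>S\<^esub> h) x = (\<Oplus>g\<in>supp f. f g \<otimes> \<alpha> g (h (inv\<^bsub>G\<^esub> g \<otimes>\<^bsub>G\<^esub> x)))"
  by (simp add: skew_mult)

lemma supp_subset: "supp f \<subseteq> carrier G"
  by (auto simp: supp_def)

lemma not_in_supp: "x \<in> carrier G \<Longrightarrow> x \<notin> supp f \<Longrightarrow> f x = \<zero>"
  by (auto simp: supp_def)

lemma skew_memI:
  assumes "f \<in> extensional (carrier G)" "\<And>x. x \<in> carrier G \<Longrightarrow> f x \<in> carrier R" "finite (supp f)"
  shows "f \<in> carrier S"
  using assms by (auto simp: skew_carrier PiE_iff)

lemma skew_closed: "f \<in> carrier S \<Longrightarrow> x \<in> carrier G \<Longrightarrow> f x \<in> carrier R"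
  by (auto simp: skew_carrier)

lemma finite_supp [simp]: "f \<in> carrier S \<Longrightarrow> finite (supp f)"
  by (simp add: skew_carrier)

lemma skew_eqI:
  assumes f: "f \<in> carrier S" and h: "h \<in> carrier S" and eq: "\<And>x. x \<in> carrier G \<Longrightarrow> f x = h x"
  shows "f = h"
proof -
  have "f \<in> carrier G \<rightarrow>\<^sub>E carrier R" "h \<in> carrier G \<rightarrow>\<^sub>E carrier R"
    using f h unfolding skew_carrier by blast+
  then show ?thesis
    using eq by (rule PiE_ext)
qed

lemma skew_term_closed:
  "f \<in> carrier S \<Longrightarrow> h \<in> carrier S \<Longrightarrow> g \<in> carrier G \<Longrightarrow> x \<in> carrier G \<Longrightarrow>
   f g \<otimes> \<alpha> g (h (inv\<^bsub>G\<^esub> g \<otimes>\<^bsub>G\<^esub> x)) \<in> carrier R"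
  by (simp add: skew_closed)

lemma skew_mult_apply_superset:
  assumes f: "f \<in> carrier S" and h: "h \<in> carrier S" and x: "x \<in> carrier G"
    and A: "finite A" "supp f \<subseteq> A" "A \<subseteq> carrier G"
  shows "(f \<otimes>\<^bsub>S\<^esub> h) x = (\<Oplus>g\<in>A. f g \<otimes> \<alpha> g (h (inv\<^bsub>G\<^esub> g \<otimes>\<^bsub>G\<^esub> x)))"
  unfolding skew_mult
proof (simp only: restrict_apply' x, rule add.finprod_mono_neutral_cong_left)
  fix g assume "g \<in> A - supp f"
  then show "f g \<otimes> \<alpha> g (h (inv\<^bsub>G\<^esub> g \<otimes>\<^bsub>G\<^esub> x)) = \<zero>"
    using A x h by (auto simp: not_in_supp skew_closed)
qed (use assms skew_term_closed in auto)

lemma supp_skew_mult: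
  assumes f: "f \<in> carrier S" and h: "h \<in> carrier S"
  shows "supp (f \<otimes>\<^bsub>S\<^esub> h) \<subseteq> (\<lambda>(a, b). a \<otimes>\<^bsub>G\<^esub> b) ` (supp f \<times> supp h)"
proof
  fix x assume "x \<in> supp (f \<otimes>\<^bsub>S\<^esub> h)"
  then have x: "x \<in> carrier G" and nz: "(\<Oplus>g\<in>supp f. f g \<otimes> \<alpha> g (h (inv\<^bsub>G\<^esub> g \<otimes>\<^bsub>G\<^esub> x))) \<noteq> \<zero>"
    by (auto simp: supp_def skew_mult)
  have "\<exists>g\<in>supp f. f g \<otimes> \<alpha> g (h (inv\<^bsub>G\<^esub> g \<otimes>\<^bsub>G\<^esub> x)) \<noteq> \<zero>"
  proof (rule ccontr)
    assume "\<not> ?thesis"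
    then have "(\<Oplus>g\<in>supp f. f g \<otimes> \<alpha> g (h (inv\<^bsub>G\<^esub> g \<otimes>\<^bsub>G\<^esub> x))) = \<zero>"
      by (intro add.finprod_one_eqI) simp
    with nz show False ..
  qed
  then obtain g where g: "g \<in> supp f" and "f g \<otimes> \<alpha> g (h (inv\<^bsub>G\<^esub> g \<otimes>\<^bsub>G\<^esub> x)) \<noteq> \<zero>"
    by blast
  then have "inv\<^bsub>G\<^esub> g \<otimes>\<^bsub>G\<^esub> x \<in> supp h"
    using x f by (auto simp: supp_def skew_closed)
  moreover have "x = g \<otimes>\<^bsub>G\<^esub> (inv\<^bsub>G\<^esub> g \<otimes>\<^bsub>G\<^esub> x)"
    using g x by (simp add: supp_def G.m_assoc[symmetric])
  ultimately show "x \<in> (\<lambda>(a, b). a \<otimes>\<^bsub>G\<^esub> b) ` (supp f \<times> supp h)"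
    using g by force
qed

lemma skew_mult_closed [simp]:
  assumes f: "f \<in> carrier S" and h: "h \<in> carrier S"
  shows "f \<otimes>\<^bsub>S\<^esub> h \<in> carrier S"
proof (rule skew_memI)
  show "finite (supp (f \<otimes>\<^bsub>S\<^esub> h))"
    using supp_skew_mult[OF f h] f h by (meson finite_supp finite_SigmaI finite_imageI finite_subset)
next
  show "(f \<otimes>\<^bsub>S\<^esub> h) x \<in> carrier R" if "x \<in> carrier G" for x
    using f h that supp_subset by (auto simp: skew_mult intro!: finsum_closed skew_term_closed)
qed (simp add: skew_mult)

lemma skew_add_closed [simp]:
  assumes f: "f \<in> carrier S" and h: "h \<in> carrier S"
  shows "f \<oplus>\<^bsub>S\<^esub> h \<in> carrier S"
proof (rule skew_memI)
  have "supp (f \<oplus>\<^bsub>S\<^esub> h) \<subseteq> supp f \<union> supp h"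
    by (auto simp: supp_def skew_add)
  then show "finite (supp (f \<oplus>\<^bsub>S\<^esub> h))"
    using f h by (meson finite_supp finite_UnI finite_subset)
qed (use f h in \<open>auto simp: skew_add skew_closed\<close>)

lemma skew_zero_closed [simp]: "\<zero>\<^bsub>S\<^esub> \<in> carrier S"
  by (rule skew_memI) (simp_all add: skew_zero supp_def)

lemma single_apply: "x \<in> carrier G \<Longrightarrow> single r k x = (if x = k then r else \<zero>)"
  by (simp add: single_def)

lemma single_closed [simp]: "r \<in> carrier R \<Longrightarrow> single r k \<in> carrier S"
  by (rule skew_memI) (auto simp: single_def supp_def intro: finite_subset[of _ "{k}"])

lemma skew_one_closed [simp]: "\<one>\<^bsub>S\<^esub> \<in> carrier S"
  by (simp add: skew_one)

lemma skew_a_inv_closed: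
  assumes f: "f \<in> carrier S"
  shows "(\<lambda>x\<in>carrier G. \<ominus> f x) \<in> carrier S"
proof (rule skew_memI)
  have "supp (\<lambda>x\<in>carrier G. \<ominus> f x) \<subseteq> supp f"
    by (auto simp: supp_def)
  then show "finite (supp (\<lambda>x\<in>carrier G. \<ominus> f x))"
    using finite_supp[OF f] by (rule finite_subset)
qed (use f in \<open>auto simp: skew_closed\<close>)

lemma single_mult_left:
  assumes r: "r \<in> carrier R" and k: "k \<in> carrier G" and f: "f \<in> carrier S" and x: "x \<in> carrier G"
  shows "(single r k \<otimes>\<^bsub>S\<^esub> f) x = r \<otimes> \<alpha> k (f (inv\<^bsub>G\<^esub> k \<otimes>\<^bsub>G\<^esub> x))"
proof -
  have "(single r k \<otimes>\<^bsub>S\<^esub> f) x = (\<Oplus>g\<in>{k}. single r k g \<otimes> \<alpha> g (f (inv\<^bsub>G\<^esub> g \<otimes>\<^bsub>G\<^esub> x)))"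
    using assms by (intro skew_mult_apply_superset) (auto simp: supp_def single_apply split: if_splits)
  then show ?thesis
    using assms skew_closed[OF f] by (simp add: single_apply)
qed

lemma single_mult_right:
  assumes d: "d \<in> carrier R" and k: "k \<in> carrier G" and f: "f \<in> carrier S" and x: "x \<in> carrier G"
  shows "(f \<otimes>\<^bsub>S\<^esub> single d k) x = f (x \<otimes>\<^bsub>G\<^esub> inv\<^bsub>G\<^esub> k) \<otimes> \<alpha> (x \<otimes>\<^bsub>G\<^esub> inv\<^bsub>G\<^esub> k) d"
proof -
  define p where "p = x \<otimes>\<^bsub>G\<^esub> inv\<^bsub>G\<^esub> k"
  have p: "p \<in> carrier G"
    using x k by (simp add: p_def)
  have shift: "inv\<^bsub>G\<^esub> g \<otimes>\<^bsub>G\<^esub> x = k \<longleftrightarrow> g = p" if "g \<in> carrier G" for g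
    using that x k unfolding p_def
    by (metis G.inv_closed G.inv_solve_left G.inv_solve_right G.m_closed)
  have "(f \<otimes>\<^bsub>S\<^esub> single d k) x = (\<Oplus>g\<in>insert p (supp f). f g \<otimes> \<alpha> g (single d k (inv\<^bsub>G\<^esub> g \<otimes>\<^bsub>G\<^esub> x)))"
    using assms p supp_subset[of f] by (intro skew_mult_apply_superset) auto
  also have "\<dots> = f p \<otimes> \<alpha> p (single d k (inv\<^bsub>G\<^esub> p \<otimes>\<^bsub>G\<^esub> x))"
    using assms p shift finite_supp[OF f] by (intro finsum_eq_single) (auto simp: single_apply supp_def skew_closed)
  also have "\<dots> = f p \<otimes> \<alpha> p d"
    using p k shift[OF p] by (simp add: single_apply)
  finally show ?thesis
    unfolding p_def .
qed

lemma single_mult: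
  assumes "r \<in> carrier R" "s \<in> carrier R" "k \<in> carrier G" "l \<in> carrier G"
  shows "single r k \<otimes>\<^bsub>S\<^esub> single s l = single (r \<otimes> \<alpha> k s) (k \<otimes>\<^bsub>G\<^esub> l)"
proof (rule skew_eqI)
  fix x assume x: "x \<in> carrier G"
  have shift: "inv\<^bsub>G\<^esub> k \<otimes>\<^bsub>G\<^esub> x = l \<longleftrightarrow> x = k \<otimes>\<^bsub>G\<^esub> l"
  proof -
    have "l = inv\<^bsub>G\<^esub> k \<otimes>\<^bsub>G\<^esub> x \<longleftrightarrow> x = k \<otimes>\<^bsub>G\<^esub> l"
      using assms x by (intro G.inv_solve_left) auto
    then show ?thesis
      by metis
  qed
  have "(single r k \<otimes>\<^bsub>S\<^esub> single s l) x = r \<otimes> \<alpha> k (single s l (inv\<^bsub>G\<^esub> k \<otimes>\<^bsub>G\<^esub> x))"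
    by (rule single_mult_left) (simp_all add: assms x)
  also have "\<dots> = single (r \<otimes> \<alpha> k s) (k \<otimes>\<^bsub>G\<^esub> l) x"
  proof (cases "x = k \<otimes>\<^bsub>G\<^esub> l")
    case True
    then have "inv\<^bsub>G\<^esub> k \<otimes>\<^bsub>G\<^esub> x = l"
      using shift by blast
    then show ?thesis
      using True assms by (simp add: single_apply)
  next
    case False
    then have "inv\<^bsub>G\<^esub> k \<otimes>\<^bsub>G\<^esub> x \<noteq> l"
      using shift by blast
    then show ?thesis
      using False assms x by (simp add: single_apply)
  qed
  finally show "(single r k \<otimes>\<^bsub>S\<^esub> single s l) x = single (r \<otimes> \<alpha> k s) (k \<otimes>\<^bsub>G\<^esub> l) x" .
qed (use assms in auto)

lemma single_add:
  assumes "r \<in> carrier R" "s \<in> carrier R"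
  shows "single r k \<oplus>\<^bsub>S\<^esub> single s k = single (r \<oplus> s) k"
proof (rule skew_eqI)
  fix x assume "x \<in> carrier G"
  then show "(single r k \<oplus>\<^bsub>S\<^esub> single s k) x = single (r \<oplus> s) k x"
    by (simp add: skew_add single_apply)
qed (simp_all add: assms)

lemma single_eq_iff:
  assumes "k \<in> carrier G"
  shows "single r k = single s k \<longleftrightarrow> r = s"
proof
  assume "single r k = single s k"
  then have "single r k k = single s k k"
    by (rule arg_cong)
  then show "r = s"
    using assms by (simp add: single_apply)
qed (rule arg_cong)

lemma single_zero: "single \<zero> k = \<zero>\<^bsub>S\<^esub>"
  by (simp add: single_def skew_zero)

lemma skew_abelian_group: "abelian_group S"
proof (rule abelian_groupI)
  fix f h k assume f: "f \<in> carrier S" and h: "h \<in> carrier S" and k: "k \<in> carrier S"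
  show "f \<oplus>\<^bsub>S\<^esub> h \<oplus>\<^bsub>S\<^esub> k = f \<oplus>\<^bsub>S\<^esub> (h \<oplus>\<^bsub>S\<^esub> k)"
    using f h k by (intro skew_eqI) (simp_all add: skew_add_apply skew_closed a_assoc)
  show "f \<oplus>\<^bsub>S\<^esub> h = h \<oplus>\<^bsub>S\<^esub> f"
    using f h by (intro skew_eqI) (simp_all add: skew_add_apply skew_closed a_comm)
next
  fix f assume f: "f \<in> carrier S"
  show "\<zero>\<^bsub>S\<^esub> \<oplus>\<^bsub>S\<^esub> f = f"
    using f by (intro skew_eqI) (simp_all add: skew_add_apply skew_zero_apply skew_closed)
  have "(\<lambda>x\<in>carrier G. \<ominus> f x) \<oplus>\<^bsub>S\<^esub> f = \<zero>\<^bsub>S\<^esub>"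
    using f skew_a_inv_closed[OF f]
    by (intro skew_eqI) (simp_all add: skew_add_apply skew_zero_apply skew_closed l_neg)
  then show "\<exists>h\<in>carrier S. h \<oplus>\<^bsub>S\<^esub> f = \<zero>\<^bsub>S\<^esub>"
    using skew_a_inv_closed[OF f] by blast
qed simp_all

lemma skew_l_distr:
  assumes f: "f \<in> carrier S" and h: "h \<in> carrier S" and k: "k \<in> carrier S"
  shows "(f \<oplus>\<^bsub>S\<^esub> h) \<otimes>\<^bsub>S\<^esub> k = f \<otimes>\<^bsub>S\<^esub> k \<oplus>\<^bsub>S\<^esub> h \<otimes>\<^bsub>S\<^esub> k"
proof (rule skew_eqI)
  fix x assume x: "x \<in> carrier G"
  define A where "A = supp f \<union> supp h"
  have A: "finite A" "supp f \<subseteq> A" "supp h \<subseteq> A" "A \<subseteq> carrier G"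
    using f h supp_subset by (auto simp: A_def)
  have "supp (f \<oplus>\<^bsub>S\<^esub> h) \<subseteq> A"
    by (auto simp: A_def supp_def skew_add)
  then have "((f \<oplus>\<^bsub>S\<^esub> h) \<otimes>\<^bsub>S\<^esub> k) x
      = (\<Oplus>g\<in>A. (f \<oplus>\<^bsub>S\<^esub> h) g \<otimes> \<alpha> g (k (inv\<^bsub>G\<^esub> g \<otimes>\<^bsub>G\<^esub> x)))"
    using f h k x A by (intro skew_mult_apply_superset) auto
  also have "\<dots> = (\<Oplus>g\<in>A. f g \<otimes> \<alpha> g (k (inv\<^bsub>G\<^esub> g \<otimes>\<^bsub>G\<^esub> x)) \<oplus> h g \<otimes> \<alpha> g (k (inv\<^bsub>G\<^esub> g \<otimes>\<^bsub>G\<^esub> x)))"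
    using f h k x A(4) by (intro finsum_cong') (auto simp: skew_add skew_closed l_distr)
  also have "\<dots> = (f \<otimes>\<^bsub>S\<^esub> k) x \<oplus> (h \<otimes>\<^bsub>S\<^esub> k) x"
    using f h k x A by (simp add: finsum_addf skew_term_closed skew_mult_apply_superset subset_iff)
  finally show "((f \<oplus>\<^bsub>S\<^esub> h) \<otimes>\<^bsub>S\<^esub> k) x = (f \<otimes>\<^bsub>S\<^esub> k \<oplus>\<^bsub>S\<^esub> h \<otimes>\<^bsub>S\<^esub> k) x"
    using x by (simp add: skew_add)
qed (use f h k in auto)

lemma skew_r_distr:
  assumes f: "f \<in> carrier S" and h: "h \<in> carrier S" and k: "k \<in> carrier S"
  shows "k \<otimes>\<^bsub>S\<^esub> (f \<oplus>\<^bsub>S\<^esub> h) = k \<otimes>\<^bsub>S\<^esub> f \<oplus>\<^bsub>S\<^esub> k \<otimes>\<^bsub>S\<^esub> h"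
proof (rule skew_eqI)
  fix x assume x: "x \<in> carrier G"
  have "(k \<otimes>\<^bsub>S\<^esub> (f \<oplus>\<^bsub>S\<^esub> h)) x
      = (\<Oplus>g\<in>supp k. k g \<otimes> \<alpha> g (f (inv\<^bsub>G\<^esub> g \<otimes>\<^bsub>G\<^esub> x)) \<oplus> k g \<otimes> \<alpha> g (h (inv\<^bsub>G\<^esub> g \<otimes>\<^bsub>G\<^esub> x)))"
    using f h k x supp_subset[of k] unfolding skew_mult_apply[OF x]
    by (intro finsum_cong') (auto simp: skew_add_apply skew_closed r_distr)
  also have "\<dots> = (k \<otimes>\<^bsub>S\<^esub> f) x \<oplus> (k \<otimes>\<^bsub>S\<^esub> h) x"
    using f h k x supp_subset[of k] by (simp add: finsum_addf skew_term_closed skew_mult_apply subset_iff)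
  finally show "(k \<otimes>\<^bsub>S\<^esub> (f \<oplus>\<^bsub>S\<^esub> h)) x = (k \<otimes>\<^bsub>S\<^esub> f \<oplus>\<^bsub>S\<^esub> k \<otimes>\<^bsub>S\<^esub> h) x"
    using x by (simp add: skew_add)
qed (use f h k in auto)

lemma skew_l_one: "f \<in> carrier S \<Longrightarrow> \<one>\<^bsub>S\<^esub> \<otimes>\<^bsub>S\<^esub> f = f"
  by (rule skew_eqI) (simp_all add: skew_one single_mult_left skew_closed)

lemma skew_r_one: "f \<in> carrier S \<Longrightarrow> f \<otimes>\<^bsub>S\<^esub> \<one>\<^bsub>S\<^esub> = f"
  by (rule skew_eqI) (simp_all add: skew_one single_mult_right skew_closed)

lemma finsum_left_translate:
  assumes b: "b \<in> carrier G" and A: "A \<subseteq> carrier G"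
    and F: "\<And>a. a \<in> carrier G \<Longrightarrow> F a \<in> carrier R"
  shows "(\<Oplus>a\<in>(\<lambda>c. b \<otimes>\<^bsub>G\<^esub> c) ` A. F a) = (\<Oplus>c\<in>A. F (b \<otimes>\<^bsub>G\<^esub> c))"
proof (rule finsum_reindex[where h = "\<lambda>c. b \<otimes>\<^bsub>G\<^esub> c" and f = F])
  show "F \<in> (\<lambda>c. b \<otimes>\<^bsub>G\<^esub> c) ` A \<rightarrow> carrier R"
    using A b by (auto intro: F)
  show "inj_on (\<lambda>c. b \<otimes>\<^bsub>G\<^esub> c) A"
  proof (rule inj_onI)
    fix c c' assume "c \<in> A" "c' \<in> A" "b \<otimes>\<^bsub>G\<^esub> c = b \<otimes>\<^bsub>G\<^esub> c'"
    then show "c = c'"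
      using A b G.l_cancel[of b c c'] by blast
  qed
qed

lemma finsum_shift_supp:
  assumes h: "h \<in> carrier S" and b: "b \<in> carrier G"
    and P: "finite P" "P \<subseteq> carrier G" "(\<lambda>c. b \<otimes>\<^bsub>G\<^esub> c) ` supp h \<subseteq> P"
    and \<Psi>: "\<And>a r. a \<in> carrier G \<Longrightarrow> r \<in> carrier R \<Longrightarrow> \<Psi> a r \<in> carrier R"
      "\<And>a. a \<in> carrier G \<Longrightarrow> \<Psi> a \<zero> = \<zero>"
  shows "(\<Oplus>a\<in>P. \<Psi> a (h (inv\<^bsub>G\<^esub> b \<otimes>\<^bsub>G\<^esub> a))) = (\<Oplus>c\<in>supp h. \<Psi> (b \<otimes>\<^bsub>G\<^esub> c) (h c))"
proof -
  have cancel: "inv\<^bsub>G\<^esub> b \<otimes>\<^bsub>G\<^esub> (b \<otimes>\<^bsub>G\<^esub> c) = c" if "c \<in> carrier G" for c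
    using b that by (simp add: G.m_assoc[symmetric])
  have closed: "\<Psi> a (h (inv\<^bsub>G\<^esub> b \<otimes>\<^bsub>G\<^esub> a)) \<in> carrier R" if "a \<in> carrier G" for a
    using that b by (intro \<Psi>(1) skew_closed[OF h]) auto
  have "(\<Oplus>a\<in>P. \<Psi> a (h (inv\<^bsub>G\<^esub> b \<otimes>\<^bsub>G\<^esub> a)))
      = (\<Oplus>a\<in>(\<lambda>c. b \<otimes>\<^bsub>G\<^esub> c) ` supp h. \<Psi> a (h (inv\<^bsub>G\<^esub> b \<otimes>\<^bsub>G\<^esub> a)))"
  proof (rule add.finprod_mono_neutral_cong_right)
    fix a assume a: "a \<in> P - (\<lambda>c. b \<otimes>\<^bsub>G\<^esub> c) ` supp h"
    then have aG: "a \<in> carrier G"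
      using P by blast
    have "a = b \<otimes>\<^bsub>G\<^esub> (inv\<^bsub>G\<^esub> b \<otimes>\<^bsub>G\<^esub> a)"
      using aG b by (simp add: G.m_assoc[symmetric])
    then have "inv\<^bsub>G\<^esub> b \<otimes>\<^bsub>G\<^esub> a \<notin> supp h"
      using a by blast
    then have "h (inv\<^bsub>G\<^esub> b \<otimes>\<^bsub>G\<^esub> a) = \<zero>"
      using aG b by (intro not_in_supp) auto
    then show "\<Psi> a (h (inv\<^bsub>G\<^esub> b \<otimes>\<^bsub>G\<^esub> a)) = \<zero>"
      using aG \<Psi>(2) by simp
  next
    show "(\<lambda>a. \<Psi> a (h (inv\<^bsub>G\<^esub> b \<otimes>\<^bsub>G\<^esub> a))) \<in> P \<rightarrow> carrier R"
      using P(2) by (intro Pi_I closed) blast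
  qed (use P in simp_all)
  also have "\<dots> = (\<Oplus>c\<in>supp h. \<Psi> (b \<otimes>\<^bsub>G\<^esub> c) (h (inv\<^bsub>G\<^esub> b \<otimes>\<^bsub>G\<^esub> (b \<otimes>\<^bsub>G\<^esub> c))))"
    by (rule finsum_left_translate[OF b supp_subset closed])
  also have "\<dots> = (\<Oplus>c\<in>supp h. \<Psi> (b \<otimes>\<^bsub>G\<^esub> c) (h c))"
  proof (rule finsum_cong')
    fix c assume "c \<in> supp h"
    then have "c \<in> carrier G"
      by (simp add: supp_def)
    then show "\<Psi> (b \<otimes>\<^bsub>G\<^esub> c) (h (inv\<^bsub>G\<^esub> b \<otimes>\<^bsub>G\<^esub> (b \<otimes>\<^bsub>G\<^esub> c))) = \<Psi> (b \<otimes>\<^bsub>G\<^esub> c) (h c)"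
      by (simp add: cancel)
  next
    show "(\<lambda>c. \<Psi> (b \<otimes>\<^bsub>G\<^esub> c) (h c)) \<in> supp h \<rightarrow> carrier R"
      using b h \<Psi>(1) by (auto simp: supp_def skew_closed)
  qed simp
  finally show ?thesis .
qed

lemma skew_mult_assoc_left:
  assumes f: "f \<in> carrier S" and h: "h \<in> carrier S" and k: "k \<in> carrier S" and x: "x \<in> carrier G"
  shows "((f \<otimes>\<^bsub>S\<^esub> h) \<otimes>\<^bsub>S\<^esub> k) x
    = (\<Oplus>b\<in>supp f. \<Oplus>c\<in>supp h. f b \<otimes> (\<alpha> b (h c) \<otimes> \<alpha> (b \<otimes>\<^bsub>G\<^esub> c) (k (inv\<^bsub>G\<^esub> (b \<otimes>\<^bsub>G\<^esub> c) \<otimes>\<^bsub>G\<^esub> x))))"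
proof -
  define P where "P = (\<lambda>(a, b). a \<otimes>\<^bsub>G\<^esub> b) ` (supp f \<times> supp h)"
  have P: "finite P" "P \<subseteq> carrier G"
    using f h supp_subset[of f] supp_subset[of h] by (auto simp: P_def)
  define T where "T b a = f b \<otimes> (\<alpha> b (h (inv\<^bsub>G\<^esub> b \<otimes>\<^bsub>G\<^esub> a)) \<otimes> \<alpha> a (k (inv\<^bsub>G\<^esub> a \<otimes>\<^bsub>G\<^esub> x)))" for b a
  have T: "T b a \<in> carrier R" if "b \<in> carrier G" "a \<in> carrier G" for a b
    using that f h k x by (simp add: T_def skew_closed)
  have "((f \<otimes>\<^bsub>S\<^esub> h) \<otimes>\<^bsub>S\<^esub> k) x = (\<Oplus>a\<in>P. (f \<otimes>\<^bsub>S\<^esub> h) a \<otimes> \<alpha> a (k (inv\<^bsub>G\<^esub> a \<otimes>\<^bsub>G\<^esub> x)))"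
    using f h k x P supp_skew_mult[OF f h] by (intro skew_mult_apply_superset) (simp_all add: P_def)
  also have "\<dots> = (\<Oplus>a\<in>P. \<Oplus>b\<in>supp f. T b a)"
  proof (rule finsum_cong')
    fix a assume "a \<in> P"
    then have a: "a \<in> carrier G"
      using P by blast
    have "(f \<otimes>\<^bsub>S\<^esub> h) a \<otimes> \<alpha> a (k (inv\<^bsub>G\<^esub> a \<otimes>\<^bsub>G\<^esub> x))
        = (\<Oplus>b\<in>supp f. f b \<otimes> \<alpha> b (h (inv\<^bsub>G\<^esub> b \<otimes>\<^bsub>G\<^esub> a)) \<otimes> \<alpha> a (k (inv\<^bsub>G\<^esub> a \<otimes>\<^bsub>G\<^esub> x)))"
      using a f h k x supp_subset[of f]
      by (simp add: skew_mult_apply finsum_ldistr skew_term_closed skew_closed Pi_def subset_iff)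
    also have "\<dots> = (\<Oplus>b\<in>supp f. T b a)"
      using a f h k x by (intro finsum_cong') (auto simp: T_def m_assoc supp_def skew_closed)
    finally show "(f \<otimes>\<^bsub>S\<^esub> h) a \<otimes> \<alpha> a (k (inv\<^bsub>G\<^esub> a \<otimes>\<^bsub>G\<^esub> x)) = (\<Oplus>b\<in>supp f. T b a)" .
  next
    show "(\<lambda>a. \<Oplus>b\<in>supp f. T b a) \<in> P \<rightarrow> carrier R"
      using P(2) T by (auto simp: supp_def intro!: finsum_closed)
  qed simp
  also have "\<dots> = (\<Oplus>b\<in>supp f. \<Oplus>a\<in>P. T b a)"
    using f P supp_subset[of f] T by (intro finsum_swap[symmetric]) auto
  also have "\<dots> = (\<Oplus>b\<in>supp f. \<Oplus>c\<in>supp h. f b \<otimes> (\<alpha> b (h c) \<otimes> \<alpha> (b \<otimes>\<^bsub>G\<^esub> c) (k (inv\<^bsub>G\<^esub> (b \<otimes>\<^bsub>G\<^esub> c) \<otimes>\<^bsub>G\<^esub> x))))"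
  proof (rule finsum_cong')
    fix b assume b: "b \<in> supp f"
    then have bG: "b \<in> carrier G"
      using supp_subset by blast
    show "(\<Oplus>a\<in>P. T b a) = (\<Oplus>c\<in>supp h. f b \<otimes> (\<alpha> b (h c) \<otimes> \<alpha> (b \<otimes>\<^bsub>G\<^esub> c) (k (inv\<^bsub>G\<^esub> (b \<otimes>\<^bsub>G\<^esub> c) \<otimes>\<^bsub>G\<^esub> x))))"
      unfolding T_def
      using h P b bG f k x
      by (intro finsum_shift_supp[where \<Psi> = "\<lambda>a r. f b \<otimes> (\<alpha> b r \<otimes> \<alpha> a (k (inv\<^bsub>G\<^esub> a \<otimes>\<^bsub>G\<^esub> x)))"])
        (auto simp: P_def skew_closed)
  qed (use f h k x in \<open>auto simp: supp_def skew_closed intro!: finsum_closed\<close>)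
  finally show ?thesis .
qed

lemma skew_mult_assoc_right:
  assumes f: "f \<in> carrier S" and h: "h \<in> carrier S" and k: "k \<in> carrier S" and x: "x \<in> carrier G"
  shows "(f \<otimes>\<^bsub>S\<^esub> (h \<otimes>\<^bsub>S\<^esub> k)) x
    = (\<Oplus>b\<in>supp f. \<Oplus>c\<in>supp h. f b \<otimes> (\<alpha> b (h c) \<otimes> \<alpha> (b \<otimes>\<^bsub>G\<^esub> c) (k (inv\<^bsub>G\<^esub> (b \<otimes>\<^bsub>G\<^esub> c) \<otimes>\<^bsub>G\<^esub> x))))"
  unfolding skew_mult[of f] restrict_apply' [OF x]
proof (rule finsum_cong')
  fix b assume "b \<in> supp f"
  then have b: "b \<in> carrier G"
    using supp_subset by blast
  have shift: "inv\<^bsub>G\<^esub> c \<otimes>\<^bsub>G\<^esub> (inv\<^bsub>G\<^esub> b \<otimes>\<^bsub>G\<^esub> x) = inv\<^bsub>G\<^esub> (b \<otimes>\<^bsub>G\<^esub> c) \<otimes>\<^bsub>G\<^esub> x" if "c \<in> carrier G" for c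
    using b that x by (simp add: G.inv_mult_group G.m_assoc)
  have "\<alpha> b ((h \<otimes>\<^bsub>S\<^esub> k) (inv\<^bsub>G\<^esub> b \<otimes>\<^bsub>G\<^esub> x))
      = (\<Oplus>c\<in>supp h. \<alpha> b (h c \<otimes> \<alpha> c (k (inv\<^bsub>G\<^esub> c \<otimes>\<^bsub>G\<^esub> (inv\<^bsub>G\<^esub> b \<otimes>\<^bsub>G\<^esub> x)))))"
    using b h k x supp_subset[of h]
    by (simp add: skew_mult_apply action_finsum skew_term_closed Pi_def subset_iff)
  also have "\<dots> = (\<Oplus>c\<in>supp h. \<alpha> b (h c) \<otimes> \<alpha> (b \<otimes>\<^bsub>G\<^esub> c) (k (inv\<^bsub>G\<^esub> (b \<otimes>\<^bsub>G\<^esub> c) \<otimes>\<^bsub>G\<^esub> x)))"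
    using b h k x supp_subset[of h]
    by (intro finsum_cong') (auto simp: shift action_mult_group skew_closed)
  finally show "f b \<otimes> \<alpha> b ((h \<otimes>\<^bsub>S\<^esub> k) (inv\<^bsub>G\<^esub> b \<otimes>\<^bsub>G\<^esub> x))
      = (\<Oplus>c\<in>supp h. f b \<otimes> (\<alpha> b (h c) \<otimes> \<alpha> (b \<otimes>\<^bsub>G\<^esub> c) (k (inv\<^bsub>G\<^esub> (b \<otimes>\<^bsub>G\<^esub> c) \<otimes>\<^bsub>G\<^esub> x))))"
    using b f h k x supp_subset[of h]
    by (simp add: finsum_rdistr skew_closed Pi_def subset_iff)
qed (use f h k x in \<open>auto simp: supp_def skew_closed intro!: finsum_closed\<close>)

lemma skew_mult_assoc:
  "f \<in> carrier S \<Longrightarrow> h \<in> carrier S \<Longrightarrow> k \<in> carrier S \<Longrightarrow>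
   (f \<otimes>\<^bsub>S\<^esub> h) \<otimes>\<^bsub>S\<^esub> k = f \<otimes>\<^bsub>S\<^esub> (h \<otimes>\<^bsub>S\<^esub> k)"
  by (rule skew_eqI) (simp_all add: skew_mult_assoc_left skew_mult_assoc_right)

lemma skew_ring: "ring S"
proof (rule ringI)
  show "monoid S"
    by (rule monoidI) (auto simp: skew_mult_assoc skew_l_one skew_r_one)
qed (auto simp: skew_abelian_group skew_l_distr skew_r_distr)

lemma skew_a_inv:
  assumes f: "f \<in> carrier S"
  shows "\<ominus>\<^bsub>S\<^esub> f = (\<lambda>x\<in>carrier G. \<ominus> f x)"
proof -
  interpret S: ring S
    by (rule skew_ring)
  have "(\<lambda>x\<in>carrier G. \<ominus> f x) \<oplus>\<^bsub>S\<^esub> f = \<zero>\<^bsub>S\<^esub>"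
    using f skew_a_inv_closed[OF f]
    by (intro skew_eqI) (simp_all add: skew_add_apply skew_zero_apply skew_closed l_neg)
  then show ?thesis
    using S.minus_equality skew_a_inv_closed[OF f] f by blast
qed

lemma single_a_inv: "r \<in> carrier R \<Longrightarrow> \<ominus>\<^bsub>S\<^esub> single r k = single (\<ominus> r) k"
  by (simp add: skew_a_inv) (rule skew_eqI, simp_all add: single_apply skew_a_inv_closed)

lemma skew_one_eq_zero_iff: "\<one>\<^bsub>S\<^esub> = \<zero>\<^bsub>S\<^esub> \<longleftrightarrow> \<one> = \<zero>"
  using single_eq_iff[of "\<one>\<^bsub>G\<^esub>" \<one> \<zero>] by (simp add: skew_one single_zero)

lemma skew_carrier_trivial_iff: "carrier S = {\<zero>\<^bsub>S\<^esub>} \<longleftrightarrow> carrier R = {\<zero>}"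
proof -
  interpret S: ring S
    by (rule skew_ring)
  show ?thesis
    using S.carrier_one_zero carrier_one_zero skew_one_eq_zero_iff by simp
qed

lemma skew_mult_apply_mem_ideal:
  assumes I: "ideal I R" and f: "f \<in> carrier S" and x: "x \<in> carrier G"
    and terms: "\<And>g. g \<in> carrier G \<Longrightarrow> f g \<otimes> \<alpha> g (h (inv\<^bsub>G\<^esub> g \<otimes>\<^bsub>G\<^esub> x)) \<in> I"
  shows "(f \<otimes>\<^bsub>S\<^esub> h) x \<in> I"
  unfolding skew_mult_apply[OF x]
  using f by (intro ideal.finsum_in_ideal[OF I] finite_supp terms) (simp_all add: supp_def)

definition ideal_extension :: "'a set \<Rightarrow> ('g \<Rightarrow> 'a) set" where
  "ideal_extension I = {f \<in> carrier S. \<forall>x\<in>carrier G. f x \<in> I}"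

lemma ideal_extension_ideal:
  assumes "G_invariant_ideal G R \<alpha> I"
  shows "ideal (ideal_extension I) S"
proof -
  interpret I: ideal I R
    using assms by (simp add: G_invariant_ideal_def)
  have invariant: "\<alpha> g r \<in> I" if "g \<in> carrier G" "r \<in> I" for g r
    using assms that by (auto simp: G_invariant_ideal_def)
  interpret S: ring S
    by (rule skew_ring)
  show ?thesis
  proof (rule idealI[OF skew_ring])
    show "subgroup (ideal_extension I) (add_monoid S)"
    proof (rule S.add.subgroupI)
      show "ideal_extension I \<noteq> {}"
        using I.zero_closed by (auto simp: ideal_extension_def skew_zero_apply intro!: exI[of _ "\<zero>\<^bsub>S\<^esub>"])
      fix f h assume "f \<in> ideal_extension I" "h \<in> ideal_extension I"
      then show "\<ominus>\<^bsub>S\<^esub> f \<in> ideal_extension I" "f \<oplus>\<^bsub>S\<^esub> h \<in> ideal_extension I"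
        by (auto simp: ideal_extension_def skew_a_inv skew_a_inv_closed skew_add_apply
            I.a_inv_closed I.a_closed)
    qed (auto simp: ideal_extension_def)
  next
    fix f h assume f: "f \<in> ideal_extension I" and h: "h \<in> carrier S"
    then have fS: "f \<in> carrier S" and fI: "\<And>x. x \<in> carrier G \<Longrightarrow> f x \<in> I"
      by (auto simp: ideal_extension_def)
    have "(h \<otimes>\<^bsub>S\<^esub> f) x \<in> I" if "x \<in> carrier G" for x
      using fS h that
      by (intro skew_mult_apply_mem_ideal[OF I.is_ideal] I.I_l_closed invariant fI) (simp_all add: skew_closed)
    moreover have "(f \<otimes>\<^bsub>S\<^esub> h) x \<in> I" if "x \<in> carrier G" for x
      using fS h that
      by (intro skew_mult_apply_mem_ideal[OF I.is_ideal] I.I_r_closed fI) (simp_all add: skew_closed)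
    ultimately show "h \<otimes>\<^bsub>S\<^esub> f \<in> ideal_extension I" "f \<otimes>\<^bsub>S\<^esub> h \<in> ideal_extension I"
      using fS h by (simp_all add: ideal_extension_def)
  qed
qed

definition ideal_restriction :: "('g \<Rightarrow> 'a) set \<Rightarrow> 'a set" where
  "ideal_restriction J = {r \<in> carrier R. single r \<one>\<^bsub>G\<^esub> \<in> J}"

lemma ideal_restriction_G_invariant:
  assumes "ideal J S"
  shows "G_invariant_ideal G R \<alpha> (ideal_restriction J)"
proof -
  interpret J: ideal J S
    by fact
  have ideal: "ideal (ideal_restriction J) R"
  proof (rule idealI[OF ring_axioms])
    show "subgroup (ideal_restriction J) (add_monoid R)"
    proof (rule add.subgroupI)
      show "ideal_restriction J \<noteq> {}"
        using J.zero_closed by (auto simp: ideal_restriction_def single_zero)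
    qed (auto simp: ideal_restriction_def single_add[symmetric] single_a_inv[symmetric]
        intro: J.a_closed J.a_inv_closed)
  next
    fix r s assume "r \<in> ideal_restriction J" "s \<in> carrier R"
    then show "s \<otimes> r \<in> ideal_restriction J" "r \<otimes> s \<in> ideal_restriction J"
      using J.I_l_closed[of "single r \<one>\<^bsub>G\<^esub>" "single s \<one>\<^bsub>G\<^esub>"]
        J.I_r_closed[of "single r \<one>\<^bsub>G\<^esub>" "single s \<one>\<^bsub>G\<^esub>"]
      by (auto simp: ideal_restriction_def single_mult)
  qed
  have "\<alpha> g r \<in> ideal_restriction J" if g: "g \<in> carrier G" and r: "r \<in> ideal_restriction J" for g r
  proof -
    have "single \<one> g \<otimes>\<^bsub>S\<^esub> single r \<one>\<^bsub>G\<^esub> \<otimes>\<^bsub>S\<^esub> single \<one> (inv\<^bsub>G\<^esub> g) = single (\<alpha> g r) \<one>\<^bsub>G\<^esub>"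
      using g r by (simp add: ideal_restriction_def single_mult)
    moreover have "single \<one> g \<otimes>\<^bsub>S\<^esub> single r \<one>\<^bsub>G\<^esub> \<otimes>\<^bsub>S\<^esub> single \<one> (inv\<^bsub>G\<^esub> g) \<in> J"
      using r by (simp add: ideal_restriction_def J.I_l_closed J.I_r_closed)
    ultimately show ?thesis
      using g r by (simp add: ideal_restriction_def)
  qed
  with ideal show ?thesis
    by (auto simp: G_invariant_ideal_def)
qed

lemma simple_imp_G_simple:
  assumes "simple_ring S"
  shows "G_simple G R \<alpha>"
  unfolding G_simple_def
proof (intro conjI allI impI)
  show "carrier R \<noteq> {\<zero>}"
    using assms skew_carrier_trivial_iff by (simp add: simple_ring_def)
  fix I assume I: "G_invariant_ideal G R \<alpha> I"
  then interpret I: ideal I R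
    by (simp add: G_invariant_ideal_def)
  have single_mem: "single r \<one>\<^bsub>G\<^esub> \<in> ideal_extension I" if "r \<in> I" for r
    using that I.Icarr I.zero_closed by (auto simp: ideal_extension_def single_apply)
  have "ideal_extension I = {\<zero>\<^bsub>S\<^esub>} \<or> ideal_extension I = carrier S"
    using assms ideal_extension_ideal[OF I] by (simp add: simple_ring_def)
  then show "I = {\<zero>} \<or> I = carrier R"
  proof
    assume "ideal_extension I = {\<zero>\<^bsub>S\<^esub>}"
    then have "r = \<zero>" if "r \<in> I" for r
      using single_mem[OF that] single_eq_iff[of "\<one>\<^bsub>G\<^esub>" r \<zero>]
      by (simp add: single_zero)
    then show ?thesis
      using I.zero_closed by blast
  next
    assume "ideal_extension I = carrier S"
    then have "single \<one> \<one>\<^bsub>G\<^esub> \<in> ideal_extension I"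
      using skew_one_closed by (simp add: skew_one)
    then have "single \<one> \<one>\<^bsub>G\<^esub> \<one>\<^bsub>G\<^esub> \<in> I"
      by (simp add: ideal_extension_def)
    then show ?thesis
      using I.one_imp_carrier by (simp add: single_apply)
  qed
qed

lemma skew_minus_apply:
  "f \<in> carrier S \<Longrightarrow> h \<in> carrier S \<Longrightarrow> x \<in> carrier G \<Longrightarrow> (f \<ominus>\<^bsub>S\<^esub> h) x = f x \<ominus> h x"
  by (simp add: a_minus_def skew_add_apply skew_a_inv)

lemma single_mult_mult_single_apply:
  assumes "c \<in> carrier R" "d \<in> carrier R" "k \<in> carrier G" "f \<in> carrier S" "x \<in> carrier G"
  shows "(single c \<one>\<^bsub>G\<^esub> \<otimes>\<^bsub>S\<^esub> f \<otimes>\<^bsub>S\<^esub> single d k) x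
    = c \<otimes> f (x \<otimes>\<^bsub>G\<^esub> inv\<^bsub>G\<^esub> k) \<otimes> \<alpha> (x \<otimes>\<^bsub>G\<^esub> inv\<^bsub>G\<^esub> k) d"
  using assms by (simp add: single_mult_right single_mult_left skew_closed)

lemma card_supp_single_mult_mult_single_le:
  assumes "c \<in> carrier R" "d \<in> carrier R" "k \<in> carrier G" "f \<in> carrier S"
  shows "card (supp (single c \<one>\<^bsub>G\<^esub> \<otimes>\<^bsub>S\<^esub> f \<otimes>\<^bsub>S\<^esub> single d k)) \<le> card (supp f)"
proof -
  have "supp (single c \<one>\<^bsub>G\<^esub> \<otimes>\<^bsub>S\<^esub> f \<otimes>\<^bsub>S\<^esub> single d k) \<subseteq> (\<lambda>y. y \<otimes>\<^bsub>G\<^esub> k) ` supp f"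
  proof
    fix x assume "x \<in> supp (single c \<one>\<^bsub>G\<^esub> \<otimes>\<^bsub>S\<^esub> f \<otimes>\<^bsub>S\<^esub> single d k)"
    then have "x \<in> carrier G" "f (x \<otimes>\<^bsub>G\<^esub> inv\<^bsub>G\<^esub> k) \<noteq> \<zero>"
      using assms by (auto simp: supp_def single_mult_mult_single_apply)
    then show "x \<in> (\<lambda>y. y \<otimes>\<^bsub>G\<^esub> k) ` supp f"
      using assms by (intro image_eqI[of _ _ "x \<otimes>\<^bsub>G\<^esub> inv\<^bsub>G\<^esub> k"]) (simp_all add: supp_def G.m_assoc)
  qed
  then show ?thesis
    using assms card_image_le card_mono by (metis finite_imageI finite_supp order_trans)
qed

definition support_minimal :: "('g \<Rightarrow> 'a) set \<Rightarrow> ('g \<Rightarrow> 'a) \<Rightarrow> bool" where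
  "support_minimal J f \<longleftrightarrow>
     f \<in> J \<and> f \<noteq> \<zero>\<^bsub>S\<^esub> \<and> (\<forall>h\<in>J. h \<noteq> \<zero>\<^bsub>S\<^esub> \<longrightarrow> card (supp f) \<le> card (supp h))"

lemma support_minimal_exists:
  assumes "ideal J S" "J \<noteq> {\<zero>\<^bsub>S\<^esub>}"
  shows "\<exists>f. support_minimal J f"
proof -
  obtain h where "h \<in> J" "h \<noteq> \<zero>\<^bsub>S\<^esub>"
    using assms additive_subgroup.zero_closed[OF ideal.axioms(1)] by blast
  then show ?thesis
    using ex_has_least_nat[of "\<lambda>h. h \<in> J \<and> h \<noteq> \<zero>\<^bsub>S\<^esub>" h "\<lambda>h. card (supp h)"]
    unfolding support_minimal_def by blast
qed

lemma support_minimal_vanishing: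
  assumes J: "ideal J S" and f: "support_minimal J f" and h: "h \<in> J"
    and below: "\<And>x. x \<in> carrier G \<Longrightarrow> f x = \<zero> \<Longrightarrow> h x = \<zero>"
    and p: "p \<in> carrier G" "f p \<noteq> \<zero>" "h p = \<zero>"
  shows "h = \<zero>\<^bsub>S\<^esub>"
proof (rule ccontr)
  assume "h \<noteq> \<zero>\<^bsub>S\<^esub>"
  then have le: "card (supp f) \<le> card (supp h)"
    using f h by (simp add: support_minimal_def)
  have "f \<in> carrier S"
    using f ideal.Icarr[OF J] by (simp add: support_minimal_def)
  then have fin: "finite (supp f)"
    by simp
  have "supp h \<subseteq> supp f - {p}"
    using below p by (auto simp: supp_def)
  then have "card (supp h) \<le> card (supp f - {p})"
    using fin by (intro card_mono) auto
  also have "\<dots> < card (supp f)"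
    using fin p by (intro card_Diff1_less) (simp_all add: supp_def)
  finally show False
    using le by simp
qed

lemma support_minimal_normalize:
  assumes vn: "von_neumann_regular R" and J: "ideal J S" and f: "support_minimal J f"
  obtains f' e where "support_minimal J f'" "e \<in> carrier R" "e \<otimes> e = e" "e \<noteq> \<zero>" "f' \<one>\<^bsub>G\<^esub> = e"
    "\<And>x. x \<in> carrier G \<Longrightarrow> e \<otimes> f' x = f' x" "\<And>x. x \<in> carrier G \<Longrightarrow> f' x \<otimes> \<alpha> x e = f' x"
proof -
  interpret J: ideal J S
    by (rule J)
  have fJ: "f \<in> J" and fS: "f \<in> carrier S" and "f \<noteq> \<zero>\<^bsub>S\<^esub>"
    using f J.Icarr by (auto simp: support_minimal_def)
  then obtain g0 where g0: "g0 \<in> carrier G" "f g0 \<noteq> \<zero>"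
    using skew_eqI[OF fS skew_zero_closed] by (auto simp: skew_zero_apply)
  define a where "a = f g0"
  have a: "a \<in> carrier R" "a \<noteq> \<zero>"
    using g0 fS by (simp_all add: a_def skew_closed)
  obtain b where b: "b \<in> carrier R" "a \<otimes> b \<otimes> a = a"
    using vn a by (auto simp: von_neumann_regular_def)
  define e where "e = b \<otimes> a"
  define c where "c = e \<otimes> b"
  have e: "e \<in> carrier R" "e \<otimes> e = e" and c: "c \<in> carrier R" "e \<otimes> c = c" "c \<otimes> a = e"
    using a b by (simp_all add: e_def c_def m_assoc) (simp_all add: m_assoc[symmetric])
  have "e \<noteq> \<zero>"
    using a b by (metis e_def m_assoc r_null)
  define f' where "f' = single c \<one>\<^bsub>G\<^esub> \<otimes>\<^bsub>S\<^esub> f \<otimes>\<^bsub>S\<^esub> single (\<alpha> (inv\<^bsub>G\<^esub> g0) e) (inv\<^bsub>G\<^esub> g0)"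
  have f'_apply: "f' x = c \<otimes> f (x \<otimes>\<^bsub>G\<^esub> g0) \<otimes> \<alpha> x e" if "x \<in> carrier G" for x
    using that g0 c e fS
    by (simp add: f'_def single_mult_mult_single_apply action_mult_group[symmetric] G.m_assoc)
  have "f' \<in> J"
    using fJ c e g0 by (simp add: f'_def J.I_l_closed J.I_r_closed)
  moreover have "f' \<one>\<^bsub>G\<^esub> = e"
    using g0 c e fS by (simp add: f'_apply a_def[symmetric] skew_closed)
  moreover have "card (supp f') \<le> card (supp f)"
    unfolding f'_def using c e g0 fS by (intro card_supp_single_mult_mult_single_le) auto
  ultimately have "support_minimal J f'"
    using f \<open>e \<noteq> \<zero>\<close> by (auto simp: support_minimal_def skew_zero_apply dest: order_trans)
  moreover have "e \<otimes> f' x = f' x" if "x \<in> carrier G" for x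
    using that e c g0 fS by (simp add: f'_apply m_assoc[symmetric] skew_closed)
  moreover have "f' x \<otimes> \<alpha> x e = f' x" if "x \<in> carrier G" for x
  proof -
    have "\<alpha> x e \<otimes> \<alpha> x e = \<alpha> x e"
      using that e by (simp add: action_mult[symmetric])
    then show ?thesis
      using that e c g0 fS by (simp add: f'_apply m_assoc skew_closed)
  qed
  ultimately show ?thesis
    using that e \<open>e \<noteq> \<zero>\<close> \<open>f' \<one>\<^bsub>G\<^esub> = e\<close> by blast
qed

context
  fixes J f e
  assumes J: "ideal J S" and minimal: "support_minimal J f"
    and e: "e \<in> carrier R" "e \<otimes> e = e" and e_nonzero: "e \<noteq> \<zero>" and f_one: "f \<one>\<^bsub>G\<^esub> = e"
    and e_f: "\<And>x. x \<in> carrier G \<Longrightarrow> e \<otimes> f x = f x"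
    and f_e: "\<And>x. x \<in> carrier G \<Longrightarrow> f x \<otimes> \<alpha> x e = f x"
begin

lemma normalized_in_carrier: "f \<in> carrier S"
  using minimal ideal.Icarr[OF J] by (simp add: support_minimal_def)

lemma normalized_intertwines:
  assumes g: "g \<in> carrier G" and fg: "f g \<noteq> \<zero>" and x: "x \<in> corner R e e"
  shows "x \<otimes> f g = f g \<otimes> \<alpha> g x"
proof -
  interpret J: ideal J S
    by (rule J)
  have xR: "x \<in> carrier R" and ex: "e \<otimes> x = x" and xe: "x \<otimes> e = x"
    using corner_memD[OF e e x] by simp_all
  have fS: "f \<in> carrier S" and fJ: "f \<in> J"
    using normalized_in_carrier minimal by (simp_all add: support_minimal_def)
  define h where "h = single x \<one>\<^bsub>G\<^esub> \<otimes>\<^bsub>S\<^esub> f \<ominus>\<^bsub>S\<^esub> f \<otimes>\<^bsub>S\<^esub> single x \<one>\<^bsub>G\<^esub>"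
  have h_apply: "h y = x \<otimes> f y \<ominus> f y \<otimes> \<alpha> y x" if "y \<in> carrier G" for y
    using that xR fS by (simp add: h_def skew_minus_apply single_mult_left single_mult_right skew_closed)
  have "h \<in> J"
    using fJ xR by (simp add: h_def a_minus_def J.a_closed J.a_inv_closed J.I_l_closed J.I_r_closed)
  moreover have "h \<one>\<^bsub>G\<^esub> = \<zero>"
    using xR e by (simp add: h_apply f_one ex xe)
  ultimately have "h = \<zero>\<^bsub>S\<^esub>"
    using fS xR e f_one e_nonzero
    by (intro support_minimal_vanishing[OF J minimal]) (auto simp: h_apply)
  then have "h g = \<zero>"
    using g by (simp add: skew_zero_apply)
  then show ?thesis
    using g xR fS by (simp add: h_apply skew_closed)
qed

lemma normalized_left_faithful:
  assumes g: "g \<in> carrier G" and fg: "f g \<noteq> \<zero>"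
    and x: "x \<in> corner R e e" and xf: "x \<otimes> f g = \<zero>"
  shows "x = \<zero>"
proof -
  have xR: "x \<in> carrier R" and xe: "x \<otimes> e = x"
    using corner_memD[OF e e x] by simp_all
  have fS: "f \<in> carrier S" and fJ: "f \<in> J"
    using normalized_in_carrier minimal by (simp_all add: support_minimal_def)
  define h where "h = single x \<one>\<^bsub>G\<^esub> \<otimes>\<^bsub>S\<^esub> f"
  have h_apply: "h y = x \<otimes> f y" if "y \<in> carrier G" for y
    using that xR fS by (simp add: h_def single_mult_left skew_closed)
  have "h \<in> J"
    using fJ xR by (simp add: h_def ideal.I_l_closed[OF J])
  then have "h = \<zero>\<^bsub>S\<^esub>"
    using g fg xf xR fS by (intro support_minimal_vanishing[OF J minimal]) (auto simp: h_apply)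
  then have "h \<one>\<^bsub>G\<^esub> = \<zero>"
    by (simp add: skew_zero_apply)
  then show ?thesis
    by (simp add: h_apply f_one xe)
qed

lemma normalized_right_faithful:
  assumes g: "g \<in> carrier G" and fg: "f g \<noteq> \<zero>"
    and y: "y \<in> corner R (\<alpha> g e) (\<alpha> g e)" and fy: "f g \<otimes> y = \<zero>"
  shows "y = \<zero>"
proof -
  have ge: "\<alpha> g e \<in> carrier R" "\<alpha> g e \<otimes> \<alpha> g e = \<alpha> g e"
    using g e by (simp_all add: action_mult[symmetric])
  have yR: "y \<in> carrier R" and gey: "\<alpha> g e \<otimes> y = y"
    using corner_memD[OF ge ge y] by simp_all
  define z where "z = \<alpha> (inv\<^bsub>G\<^esub> g) y"
  have zR: "z \<in> carrier R" and y_z: "y = \<alpha> g z"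
    using g yR by (simp_all add: z_def)
  have "z = \<alpha> (inv\<^bsub>G\<^esub> g) (\<alpha> g e \<otimes> y)"
    using gey by (simp add: z_def)
  also have "\<dots> = e \<otimes> z"
    using g e yR by (simp add: z_def)
  finally have ez: "e \<otimes> z = z"
    by (rule sym)
  have fS: "f \<in> carrier S" and fJ: "f \<in> J"
    using normalized_in_carrier minimal by (simp_all add: support_minimal_def)
  define h where "h = f \<otimes>\<^bsub>S\<^esub> single z \<one>\<^bsub>G\<^esub>"
  have h_apply: "h x = f x \<otimes> \<alpha> x z" if "x \<in> carrier G" for x
    using that zR fS by (simp add: h_def single_mult_right)
  have "h \<in> J"
    using fJ zR by (simp add: h_def ideal.I_r_closed[OF J])
  then have "h = \<zero>\<^bsub>S\<^esub>"
    using g fg fy zR fS by (intro support_minimal_vanishing[OF J minimal]) (auto simp: h_apply y_z)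
  then have "h \<one>\<^bsub>G\<^esub> = \<zero>"
    by (simp add: skew_zero_apply)
  then have "z = \<zero>"
    using zR by (simp add: h_apply f_one ez)
  then show ?thesis
    using g by (simp add: y_z)
qed

lemma normalized_support_corner_inner:
  assumes vn: "von_neumann_regular R" and g: "g \<in> carrier G" and fg: "f g \<noteq> \<zero>"
  shows "corner_inner R (\<alpha> g)"
proof -
  have u: "f g \<in> carrier R"
    using g normalized_in_carrier by (simp add: skew_closed)
  then obtain w where "w \<in> carrier R" "f g \<otimes> w \<otimes> f g = f g"
    using vn by (auto simp: von_neumann_regular_def)
  then show ?thesis
    using action_iso[OF g] e e_nonzero u e_f[OF g] f_e[OF g]
      normalized_intertwines[OF g fg] normalized_left_faithful[OF g fg]
      normalized_right_faithful[OF g fg]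
    by (intro corner_innerI_faithful) auto
qed

end

lemma nonzero_ideal_restriction:
  assumes vn: "von_neumann_regular R"
    and outer: "\<forall>g\<in>carrier G. corner_inner R (\<alpha> g) \<longrightarrow> g = \<one>\<^bsub>G\<^esub>"
    and J: "ideal J S" and nonzero: "J \<noteq> {\<zero>\<^bsub>S\<^esub>}"
  shows "ideal_restriction J \<noteq> {\<zero>}"
proof -
  obtain f0 where "support_minimal J f0"
    using support_minimal_exists[OF J nonzero] by blast
  then obtain f e where f: "support_minimal J f" and e: "e \<in> carrier R" "e \<otimes> e = e" "e \<noteq> \<zero>"
    and f_one: "f \<one>\<^bsub>G\<^esub> = e"
    and e_f: "\<And>x. x \<in> carrier G \<Longrightarrow> e \<otimes> f x = f x"
    and f_e: "\<And>x. x \<in> carrier G \<Longrightarrow> f x \<otimes> \<alpha> x e = f x"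
    using support_minimal_normalize[OF vn J] by metis
  have fS: "f \<in> carrier S"
    using normalized_in_carrier[OF J f e f_one e_f f_e] .
  have "f g = \<zero>" if "g \<in> carrier G" "g \<noteq> \<one>\<^bsub>G\<^esub>" for g
    using normalized_support_corner_inner[OF J f e f_one e_f f_e vn] outer that by blast
  then have "f = single e \<one>\<^bsub>G\<^esub>"
    using fS e f_one by (intro skew_eqI) (auto simp: single_apply)
  then have "e \<in> ideal_restriction J"
    using f e by (simp add: support_minimal_def ideal_restriction_def)
  then show ?thesis
    using e by blast
qed

lemma G_simple_imp_simple:
  assumes vn: "von_neumann_regular R"
    and outer: "\<forall>g\<in>carrier G. corner_inner R (\<alpha> g) \<longrightarrow> g = \<one>\<^bsub>G\<^esub>"
    and G_simple: "G_simple G R \<alpha>"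
  shows "simple_ring S"
  unfolding simple_ring_def
proof (intro conjI allI impI skew_ring)
  show "carrier S \<noteq> {\<zero>\<^bsub>S\<^esub>}"
    using G_simple by (simp add: G_simple_def skew_carrier_trivial_iff)
  fix J assume J: "ideal J S"
  show "J = {\<zero>\<^bsub>S\<^esub>} \<or> J = carrier S"
  proof (cases "J = {\<zero>\<^bsub>S\<^esub>}")
    case False
    then have "ideal_restriction J = carrier R"
      using G_simple nonzero_ideal_restriction[OF vn outer J] ideal_restriction_G_invariant[OF J]
      unfolding G_simple_def by blast
    then have "\<one>\<^bsub>S\<^esub> \<in> J"
      by (auto simp: ideal_restriction_def skew_one)
    then show ?thesis
      using ideal.one_imp_carrier[OF J] by blast
  qed simp
qed

end

theorem theorem2p8:
  fixes R :: "('a, 'b) ring_scheme" and G :: "('g, 'c) monoid_scheme"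
    and \<alpha> :: "'g \<Rightarrow> 'a \<Rightarrow> 'a"
  assumes "von_neumann_regular R"
    and "group G"
    and "ring_action G R \<alpha>"
    and "\<forall>g \<in> carrier G. corner_inner R (\<alpha> g) \<longrightarrow> g = \<one>\<^bsub>G\<^esub>"
  shows "simple_ring (skew_group_ring R G \<alpha>) \<longleftrightarrow> G_simple G R \<alpha>"
proof -
  interpret ring_group_action R G \<alpha>
    using assms(1-3) by (simp add: ring_group_action_def ring_group_action_axioms_def von_neumann_regular_def)
  show ?thesis
    using simple_imp_G_simple G_simple_imp_simple[OF assms(1,4)] by blast
qed

end
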